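(* Let $\omega\in\Omega$ and consider the contours of $\phi(\omega)$. (I) If there exist at least two infinite contours, then there exists an infinite $0$-cluster or an infinite $1$-cluster. (II) If $C_1$ and $C_2$ are two distinct infinite contours, then there exists an infinite cluster incident to $C_1$. (III) If $\xi$ is a cluster incident to two distinct infinite contours, then $\xi$ is infinite. (IV) Suppose $C_1$ is an infinite contour and $\mathcal{C}$ is a nonempty collection of infinite contours with $C_1\notin\mathcal{C}$; let $R$ be the unbounded component of $\mathbb{R}^2\setminus\bigcup_{C\in\mathcal{C}}C$ containing $C_1$. Then there is an infinite cluster contained in $R$.
   Context: Let $G$ be the square grid with vertex set $\mathbb{Z}^2$ and nearest-neighbour edges. The face of $G$ with lower-left corner $(m,n)$ is black if $m+n$ is even, white otherwise. $\Omega\subset\{0,1\}^{\mathbb{Z}^2}$ is the set of $\omega$ such that for every black face the states of its four vertices, listed clockwise from the lower-left corner, form one of $0000,1111,0011,1100,0110,1001$. A cluster of $\omega$ is a maximal $G$-connected set of vertices on which $\omega$ is constant ($0$-cluster or $1$-cluster), infinite if it has infinitely many vertices. Let $\mathbb{L}_1$ have vertices $(m-\tfrac12,n+\tfrac12)$, $m,n$ both even, and $\mathbb{L}_2$ vertices $(m-\tfrac12,n+\tfrac12)$, $m,n$ both odd; in each, two vertices are joined by an edge (a closed segment of length $2$) iff at Euclidean distance $2$. The center of each black face $F$ is the midpoint of exactly one edge $e_1$ of $\mathbb{L}_1$ and one edge $e_2$ of $\mathbb{L}_2$. Define $\phi(\omega)\in\{0,1\}^{E(\mathbb{L}_1)\cup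 E(\mathbb{L}_2)}$: if the configuration around $F$ is $0000$ or $1111$ both $e_1,e_2$ get $0$; if the two upper vertices share a state different from the two lower ones, the horizontal one of $e_1,e_2$ gets $1$, the vertical $0$; if the two left vertices share a state different from the two right ones, the vertical one gets $1$, the horizontal $0$. Edges with value $1$ are present. A contour is a connected component of the set of present edges, viewed as a subset of $\mathbb{R}^2$ (union of its edges); it is infinite if it has infinitely many edges. A cluster is incident to a contour if some vertex of the cluster is at Euclidean distance $\tfrac12$ from some edge (segment) of the contour. *)

theory Defs
  imports "HOL-Analysis.Analysis"
begin

type_synonym vertex = "int \<times> int"
type_synonym config = "vertex \<Rightarrow> nat"

text \<open>The face with lower-left corner (m,n) is black iff m+n is even.\<close>
definition black :: "int \<Rightarrow> int \<Rightarrow> bool" where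
  "black m n \<longleftrightarrow> even (m + n)"

text \<open>Allowed states of the four vertices of a black face, listed clockwise
  from the lower-left corner: (m,n), (m,n+1), (m+1,n+1), (m+1,n).\<close>
definition allowed :: "(nat \<times> nat \<times> nat \<times> nat) set" where
  "allowed = {(0,0,0,0), (1,1,1,1), (0,0,1,1), (1,1,0,0), (0,1,1,0), (1,0,0,1)}"

definition Omega :: "config set" where
  "Omega = {\<omega>. (\<forall>v. \<omega> v \<in> {0,1}) \<and>
     (\<forall>m n. black m n \<longrightarrow> (\<omega> (m,n), \<omega> (m,n+1), \<omega> (m+1,n+1), \<omega> (m+1,n)) \<in> allowed)}"

definition vpt :: "vertex \<Rightarrow> real \<times> real" where
  "vpt v = (real_of_int (fst v), real_of_int (snd v))"

definition grid_adj :: "vertex \<Rightarrow> vertex \<Rightarrow> bool" where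
  "grid_adj u v \<longleftrightarrow> \<bar>fst u - fst v\<bar> + \<bar>snd u - snd v\<bar> = 1"

text \<open>Same-state nearest-neighbour step; clusters are its connectivity classes
  (= maximal G-connected sets on which \<omega> is constant).\<close>
definition same_step :: "config \<Rightarrow> vertex \<Rightarrow> vertex \<Rightarrow> bool" where
  "same_step \<omega> u v \<longleftrightarrow> grid_adj u v \<and> \<omega> u = \<omega> v"

definition cluster :: "config \<Rightarrow> vertex set \<Rightarrow> bool" where
  "cluster \<omega> \<xi> \<longleftrightarrow> (\<exists>v. \<xi> = {w. (same_step \<omega>)\<^sup>*\<^sup>* v w})"

definition L1_vert :: "(real \<times> real) set" where
  "L1_vert = {(real_of_int m - 1/2, real_of_int n + 1/2) | m n. even m \<and> even n}"

definition L2_vert :: "(real \<times> real) set" where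
  "L2_vert = {(real_of_int m - 1/2, real_of_int n + 1/2) | m n. odd m \<and> odd n}"

definition lat_edges :: "(real \<times> real) set \<Rightarrow> (real \<times> real) set set" where
  "lat_edges V = {closed_segment p q | p q. p \<in> V \<and> q \<in> V \<and> dist p q = 2}"

definition all_edges :: "(real \<times> real) set set" where
  "all_edges = lat_edges L1_vert \<union> lat_edges L2_vert"

definition face_center :: "int \<Rightarrow> int \<Rightarrow> real \<times> real" where
  "face_center m n = (real_of_int m + 1/2, real_of_int n + 1/2)"

text \<open>phi \<omega> e = True iff edge e gets value 1.  The black face F with
  lower-left corner (m,n) is the one whose center is the midpoint of e.
  Upper vertices (m,n+1),(m+1,n+1); lower (m,n),(m+1,n);
  left (m,n),(m,n+1); right (m+1,n),(m+1,n+1).\<close>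
definition phi :: "config \<Rightarrow> (real \<times> real) set \<Rightarrow> bool" where
  "phi \<omega> e \<longleftrightarrow> e \<in> all_edges \<and>
     (\<exists>p q m n. e = closed_segment p q \<and> black m n \<and> midpoint p q = face_center m n \<and>
        ((snd p = snd q \<and> \<omega> (m,n+1) = \<omega> (m+1,n+1) \<and> \<omega> (m,n) = \<omega> (m+1,n)
            \<and> \<omega> (m,n+1) \<noteq> \<omega> (m,n)) \<or>
         (fst p = fst q \<and> \<omega> (m,n) = \<omega> (m,n+1) \<and> \<omega> (m+1,n) = \<omega> (m+1,n+1)
            \<and> \<omega> (m,n) \<noteq> \<omega> (m+1,n))))"

definition present_edges :: "config \<Rightarrow> (real \<times> real) set set" where
  "present_edges \<omega> = {e. phi \<omega> e}"

definition contours :: "config \<Rightarrow> (real \<times> real) set set" where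
  "contours \<omega> = components (\<Union> (present_edges \<omega>))"

definition contour_edges :: "config \<Rightarrow> (real \<times> real) set \<Rightarrow> (real \<times> real) set set" where
  "contour_edges \<omega> C = {e \<in> present_edges \<omega>. e \<subseteq> C}"

definition infinite_contour :: "config \<Rightarrow> (real \<times> real) set \<Rightarrow> bool" where
  "infinite_contour \<omega> C \<longleftrightarrow> C \<in> contours \<omega> \<and> infinite (contour_edges \<omega> C)"

definition incident :: "config \<Rightarrow> vertex set \<Rightarrow> (real \<times> real) set \<Rightarrow> bool" where
  "incident \<omega> \<xi> C \<longleftrightarrow> (\<exists>v\<in>\<xi>. \<exists>e\<in>contour_edges \<omega> C. infdist (vpt v) e = 1/2)"

end

theory Submission
  imports Defs
begin

text \<open>
  A cluster is represented in the plane by the union of the closed unit squares centred at its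
  vertices. The constraint defining \<open>Omega\<close> forces every point where a square of a cluster
  touches a square outside it to lie on a present edge, so the frontier of this union lies in the
  union of the contours. For a finite cluster the frontier of the unbounded complementary component
  of its squares is connected, hence lies in a single contour, and every unbounded contour touching
  the squares must cross it: a finite cluster touches at most one infinite contour, which is (III).

  For (II), suppose that all clusters touching the infinite contour \<open>C\<^sub>1\<close> are finite, and let \<open>T\<close> be
  \<open>C\<^sub>1\<close> together with their squares. The complementary component of \<open>T\<close> containing a second
  infinite contour \<open>C\<^sub>2\<close> has a connected frontier lying in the contours; as \<open>C\<^sub>1\<close> and \<open>C\<^sub>2\<close> are
  unbounded, this frontier is unbounded, so it lies in an infinite contour \<open>D\<close>. A frontier point
  off \<open>C\<^sub>1\<close> lies in the square of a finite cluster touching both \<open>C\<^sub>1\<close> and \<open>D \<noteq> C\<^sub>1\<close>, contradicting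
  (III). Part (I) follows from (II) since clusters are monochromatic, and (IV) holds because the
  cluster obtained in (II) is joined to \<open>C\<^sub>1\<close> by a path that meets no contour.
\<close>

section \<open>Topology of the plane\<close>

lemma closed_segment_horizontal:
  fixes a b y :: real
  assumes "a \<le> b"
  shows "closed_segment (a,y) (b,y) = {p. snd p = y \<and> a \<le> fst p \<and> fst p \<le> b}"
proof -
  have "(x,x') \<in> closed_segment (a,y) (b,y) \<longleftrightarrow> x' = y \<and> a \<le> x \<and> x \<le> b" for x x'
  proof
    assume "(x,x') \<in> closed_segment (a,y) (b,y)"
    then have "x \<in> closed_segment a b" "x' \<in> closed_segment y y"
      using closed_segment_PairD by blast+
    then show "x' = y \<and> a \<le> x \<and> x \<le> b"
      using assms closed_segment_eq_real_ivl1 by auto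
  next
    assume h: "x' = y \<and> a \<le> x \<and> x \<le> b"
    then have "x \<in> closed_segment a b"
      using assms closed_segment_eq_real_ivl1 by auto
    then obtain u where "0 \<le> u" "u \<le> 1" "x = (1-u)*a + u*b"
      by (auto simp: closed_segment_def)
    then show "(x,x') \<in> closed_segment (a,y) (b,y)"
      using h by (auto simp: closed_segment_def algebra_simps intro!: exI[of _ u])
  qed
  then show ?thesis by auto
qed

lemma closed_segment_vertical:
  fixes a b x :: real
  assumes "a \<le> b"
  shows "closed_segment (x,a) (x,b) = {p. fst p = x \<and> a \<le> snd p \<and> snd p \<le> b}"
proof -
  have swap: "prod.swap ` closed_segment (a,x) (b,x) = closed_segment (x,a) (x,b)"
  proof -
    have "linear prod.swap" by (simp add: linear_iff)
    from closed_segment_linear_image[OF this, of "(a,x)" "(b,x)"] show ?thesis by simp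
  qed
  show ?thesis
    unfolding swap[symmetric] closed_segment_horizontal[OF assms] by force
qed

lemma dist_le_coordinates:
  fixes x y :: "real \<times> real"
  assumes "\<bar>fst x - fst y\<bar> \<le> a" "\<bar>snd x - snd y\<bar> \<le> b"
  shows "dist x y \<le> a + b"
proof -
  have "dist x y \<le> \<bar>fst x - fst y\<bar> + \<bar>snd x - snd y\<bar>"
    using sqrt_sum_squares_le_sum_abs[of "fst x - fst y" "snd x - snd y"]
    by (cases x, cases y) (simp add: dist_Pair_Pair dist_real_def)
  with assms show ?thesis by linarith
qed

lemma int_le_if_of_int_less:
  fixes a b :: int
  shows "real_of_int a < real_of_int b + 1 \<Longrightarrow> a \<le> b"
  by (metis of_int_1 of_int_add of_int_less_iff zle_add1_eq_le)

lemma no_half_integer_strictly_near_integer: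
  fixes a n :: int and x :: real
  assumes "of_int a - 1/2 < x" "x < of_int a + 1/2"
  shows "x \<noteq> of_int n + 1/2"
proof
  assume "x = of_int n + 1/2"
  then have "a \<le> n" "n + 1 \<le> a"
    using assms by (intro int_le_if_of_int_less; simp; linarith)+
  then show False
    by simp
qed

lemma infdist_eqI:
  fixes x :: "'a::metric_space"
  assumes "y \<in> A" "dist x y = d" "\<And>z. z \<in> A \<Longrightarrow> d \<le> dist x z"
  shows "infdist x A = d"
proof (rule antisym)
  show "infdist x A \<le> d"
    using infdist_le[OF assms(1), of x] assms(2) by simp
  have "A \<noteq> {}"
    using assms(1) by blast
  then show "d \<le> infdist x A"
    unfolding infdist_notempty[OF \<open>A \<noteq> {}\<close>] using assms(3) by (rule cINF_greatest)
qed

lemma closed_Union_locally_finite: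
  fixes F :: "'a::metric_space set set"
  assumes "\<And>X. X \<in> F \<Longrightarrow> closed X" and "\<And>x. finite {X \<in> F. X \<inter> ball x 1 \<noteq> {}}"
  shows "closed (\<Union>F)"
proof -
  have "openin euclidean (ball x 1) \<and> x \<in> ball x 1 \<and> finite {X \<in> F. X \<inter> ball x 1 \<noteq> {}}" for x
    using assms(2) by simp
  then have "locally_finite_in euclidean F"
    unfolding locally_finite_in_def topspace_euclidean by blast
  with assms(1) show ?thesis
    using closedin_locally_finite_Union[of F euclidean] closed_closedin by blast
qed

lemma connected_Union_rtranclp:
  fixes f :: "'b \<Rightarrow> 'a::topological_space set"
  assumes "\<And>u. connected (f u)" "\<And>u. f u \<noteq> {}" "\<And>u w. R u w \<Longrightarrow> f u \<inter> f w \<noteq> {}"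
  shows "connected (\<Union> (f ` {w. R\<^sup>*\<^sup>* v w}))"
proof -
  let ?U = "\<Union> (f ` {w. R\<^sup>*\<^sup>* v w})"
  obtain x0 where x0: "x0 \<in> f v"
    using assms(2) by blast
  have "f w \<subseteq> connected_component_set ?U x0" if "R\<^sup>*\<^sup>* v w" for w
    using that
  proof (induction rule: rtranclp_induct)
    case base
    show ?case
      by (rule connected_component_maximal[OF x0 assms(1)]) blast
  next
    case (step y z)
    obtain q where q: "q \<in> f y" "q \<in> f z"
      using assms(3)[OF step(2)] by blast
    have "f z \<subseteq> ?U"
      using step(1,2) by (blast intro: rtranclp.rtrancl_into_rtrancl)
    then have "f z \<subseteq> connected_component_set ?U q"
      by (rule connected_component_maximal[OF q(2) assms(1)])
    moreover have "connected_component_set ?U q = connected_component_set ?U x0"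
      using step.IH q(1) connected_component_eq by blast
    ultimately show ?case
      by simp
  qed
  then have "?U = connected_component_set ?U x0"
    using connected_component_subset by blast
  then show ?thesis
    by (metis connected_connected_component)
qed

lemma unbounded_outside_cball:
  fixes S :: "'a::real_normed_vector set"
  shows "\<not> bounded S \<Longrightarrow> \<exists>x\<in>S. x \<notin> cball 0 r"
  unfolding bounded_iff by (force simp: mem_cball_0 not_le)

lemma unbounded_components_meeting_bounded_connected_eq:
  fixes S P :: "'a::euclidean_space set"
  assumes dim: "2 \<le> DIM('a)" and S: "connected S" "bounded S" "frontier S \<subseteq> P"
    and C: "C1 \<in> components P" "C2 \<in> components P" "\<not> bounded C1" "\<not> bounded C2"
    and meet: "S \<inter> C1 \<noteq> {}" "S \<inter> C2 \<noteq> {}"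
  shows "C1 = C2"
proof -
  obtain r where r: "S \<subseteq> ball 0 r"
    using bounded_subset_ballD[OF S(2)] by blast
  let ?B = "- cball (0::'a) r"
  obtain b where b: "b \<in> ?B"
    using unbounded_outside_cball[OF C(3)] by blast
  let ?W = "connected_component_set (- S) b"
  have W: "?W \<in> components (- S)"
    using b r by (intro componentsI) auto
  have "?B \<subseteq> ?W"
    using b r dim by (intro connected_component_maximal connected_complement_bounded_convex) auto
  have "frontier ?W \<subseteq> P"
    using frontier_of_components_subset[OF W] S(3) by (simp add: frontier_complement)
  have outer: "C \<inter> frontier ?W \<noteq> {} \<and> frontier ?W \<subseteq> C"
    if C_comp: "C \<in> components P" "\<not> bounded C" "S \<inter> C \<noteq> {}" for C
  proof
    obtain c where "c \<in> C" "c \<in> ?B"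
      using unbounded_outside_cball[OF C_comp(2)] by blast
    then have "C \<inter> ?W \<noteq> {}" "C - ?W \<noteq> {}"
      using \<open>?B \<subseteq> ?W\<close> C_comp(3) connected_component_subset[of "- S" b] by blast+
    then show "C \<inter> frontier ?W \<noteq> {}"
      by (intro connected_Int_frontier in_components_connected[OF C_comp(1)])
    then show "frontier ?W \<subseteq> C"
      by (rule components_maximal[OF C_comp(1) connected_frontier_component_complement[OF S(1) W]
          \<open>frontier ?W \<subseteq> P\<close>])
  qed
  have "C1 \<inter> C2 \<noteq> {}"
    using outer[OF C(1) C(3) meet(1)] outer[OF C(2) C(4) meet(2)] by blast
  then show ?thesis
    using components_nonoverlap[OF C(1,2)] by blast
qed

lemma frontier_component_unbounded:
  fixes T :: "'a::euclidean_space set"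
  assumes dim: "2 \<le> DIM('a)" and V: "V \<in> components (- T)" "\<not> bounded V" and "\<not> bounded T"
  shows "\<not> bounded (frontier V)"
proof
  assume "bounded (frontier V)"
  then obtain r where r: "frontier V \<subseteq> ball 0 r"
    using bounded_subset_ballD by blast
  let ?B = "- cball (0::'a) r"
  obtain c where c: "c \<in> V" "c \<in> ?B"
    using unbounded_outside_cball[OF V(2)] by blast
  have "?B \<subseteq> V"
  proof (rule ccontr)
    assume "\<not> ?B \<subseteq> V"
    then have "?B - V \<noteq> {}" "?B \<inter> V \<noteq> {}"
      using c by blast+
    then have "?B \<inter> frontier V \<noteq> {}"
      using connected_Int_frontier[OF connected_complement_bounded_convex[OF bounded_cball convex_cball dim]]
      by blast
    then show False
      using r ball_subset_cball by blast
  qed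
  moreover obtain t where "t \<in> T" "t \<in> ?B"
    using unbounded_outside_cball[OF assms(4)] by blast
  ultimately show False
    using in_components_subset[OF V(1)] by blast
qed

lemma frontier_component_in_unbounded_component:
  fixes T P :: "'a::euclidean_space set"
  assumes dim: "2 \<le> DIM('a)" and T: "connected T" "\<not> bounded T" "frontier T \<subseteq> P"
    and V: "V \<in> components (- T)" "\<not> bounded V"
  obtains D where "D \<in> components P" "\<not> bounded D" "frontier V \<subseteq> D" "frontier V \<noteq> {}"
proof -
  have fV: "frontier V \<subseteq> P"
    using frontier_of_components_subset[OF V(1)] T(3) by (simp add: frontier_complement)
  have "\<not> bounded (frontier V)"
    by (rule frontier_component_unbounded[OF dim V T(2)])
  then obtain f where f: "f \<in> frontier V"
    by fastforce
  let ?D = "connected_component_set P f"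
  have "?D \<in> components P"
    using f fV by (auto intro: componentsI)
  moreover have "frontier V \<subseteq> ?D"
    using f fV connected_frontier_component_complement[OF T(1) V(1)]
    by (intro connected_component_maximal) auto
  moreover from this have "\<not> bounded ?D"
    using \<open>\<not> bounded (frontier V)\<close> bounded_subset by blast
  ultimately show ?thesis
    using that f by blast
qed

section \<open>Present edges and contours\<close>

text \<open>\<open>hedge m n\<close> and \<open>vedge m n\<close> are the horizontal and vertical lattice edges centred at
  the face with lower-left corner \<open>(m, n)\<close>; for a black face they are the two edges of
  \<open>all_edges\<close> through its centre.\<close>

definition hedge :: "int \<Rightarrow> int \<Rightarrow> (real \<times> real) set" where
  "hedge m n = {p. snd p = of_int n + 1/2 \<and> of_int m - 1/2 \<le> fst p \<and> fst p \<le> of_int m + 3/2}"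

definition vedge :: "int \<Rightarrow> int \<Rightarrow> (real \<times> real) set" where
  "vedge m n = {p. fst p = of_int m + 1/2 \<and> of_int n - 1/2 \<le> snd p \<and> snd p \<le> of_int n + 3/2}"

definition hedge_present :: "config \<Rightarrow> int \<Rightarrow> int \<Rightarrow> bool" where
  "hedge_present \<omega> m n \<longleftrightarrow> black m n \<and> \<omega> (m,n+1) = \<omega> (m+1,n+1) \<and> \<omega> (m,n) = \<omega> (m+1,n)
     \<and> \<omega> (m,n+1) \<noteq> \<omega> (m,n)"

definition vedge_present :: "config \<Rightarrow> int \<Rightarrow> int \<Rightarrow> bool" where
  "vedge_present \<omega> m n \<longleftrightarrow> black m n \<and> \<omega> (m,n) = \<omega> (m,n+1) \<and> \<omega> (m+1,n) = \<omega> (m+1,n+1)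
     \<and> \<omega> (m,n) \<noteq> \<omega> (m+1,n)"

lemma hedge_eq_segment:
  "hedge m n = closed_segment (of_int m - 1/2, of_int n + 1/2) (of_int m + 3/2, of_int n + 1/2)"
  by (subst closed_segment_horizontal) (auto simp: hedge_def)

lemma vedge_eq_segment:
  "vedge m n = closed_segment (of_int m + 1/2, of_int n - 1/2) (of_int m + 1/2, of_int n + 3/2)"
  by (subst closed_segment_vertical) (auto simp: vedge_def)

lemma lattice_segment_in_all_edges:
  assumes "even (a + b)" and "(c, d) = (a + 2, b) \<or> (c, d) = (a, b + 2)"
  shows "closed_segment (of_int a - 1/2, of_int b + 1/2) (of_int c - 1/2, of_int d + 1/2) \<in> all_edges"
proof -
  let ?p = "(real_of_int a - 1/2, real_of_int b + 1/2)" and ?q = "(real_of_int c - 1/2, real_of_int d + 1/2)"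
  have "dist ?p ?q = 2"
    using assms(2) by (auto simp: dist_Pair_Pair dist_real_def)
  moreover have "?p \<in> L1_vert \<and> ?q \<in> L1_vert \<or> ?p \<in> L2_vert \<and> ?q \<in> L2_vert"
    using assms unfolding L1_vert_def L2_vert_def by auto
  ultimately show ?thesis
    unfolding all_edges_def lat_edges_def by blast
qed

lemma hedge_in_all_edges: "black m n \<Longrightarrow> hedge m n \<in> all_edges"
  using lattice_segment_in_all_edges[of m n "m + 2" n]
  by (simp add: black_def hedge_eq_segment ac_simps)

lemma vedge_in_all_edges: "black m n \<Longrightarrow> vedge m n \<in> all_edges"
  using lattice_segment_in_all_edges[of "m + 1" "n - 1" "m + 1" "n + 1"]
  by (simp add: black_def vedge_eq_segment ac_simps)

lemma dist_ends_all_edges: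
  assumes "closed_segment p q \<in> all_edges"
  shows "dist p q = 2"
proof -
  obtain p' q' where "closed_segment p q = closed_segment p' q'" "dist p' q' = 2"
    using assms unfolding all_edges_def lat_edges_def by blast
  then show ?thesis
    by (auto simp: doubleton_eq_iff dist_commute)
qed

lemma centered_horizontal_segment:
  assumes "dist p q = 2" "snd p = snd q" "midpoint p q = face_center m n"
  shows "closed_segment p q = hedge m n"
proof -
  obtain x1 y x2 where pq: "p = (x1, y)" "q = (x2, y)"
    using assms(2) by (metis prod.collapse)
  have "x1 + x2 = 2 * of_int m + 1" "y = of_int n + 1/2" "\<bar>x1 - x2\<bar> = 2"
    using assms unfolding pq midpoint_def face_center_def
    by (auto simp: field_simps dist_Pair_Pair dist_real_def)
  then have "{p, q} = {(of_int m - 1/2, of_int n + 1/2), (of_int m + 3/2, of_int n + 1/2)}"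
    unfolding pq by (auto simp: abs_if split: if_splits)
  then show ?thesis
    unfolding hedge_eq_segment by (metis closed_segment_commute doubleton_eq_iff)
qed

lemma centered_vertical_segment:
  assumes "dist p q = 2" "fst p = fst q" "midpoint p q = face_center m n"
  shows "closed_segment p q = vedge m n"
proof -
  obtain x y1 y2 where pq: "p = (x, y1)" "q = (x, y2)"
    using assms(2) by (metis prod.collapse)
  have "y1 + y2 = 2 * of_int n + 1" "x = of_int m + 1/2" "\<bar>y1 - y2\<bar> = 2"
    using assms unfolding pq midpoint_def face_center_def
    by (auto simp: field_simps dist_Pair_Pair dist_real_def)
  then have "{p, q} = {(of_int m + 1/2, of_int n - 1/2), (of_int m + 1/2, of_int n + 3/2)}"
    unfolding pq by (auto simp: abs_if split: if_splits)
  then show ?thesis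
    unfolding vedge_eq_segment by (metis closed_segment_commute doubleton_eq_iff)
qed

lemma phi_iff_present_edge:
  "phi \<omega> e \<longleftrightarrow> (\<exists>m n. hedge_present \<omega> m n \<and> e = hedge m n) \<or> (\<exists>m n. vedge_present \<omega> m n \<and> e = vedge m n)"
proof
  assume "phi \<omega> e"
  then obtain p q m n where e: "e \<in> all_edges" "e = closed_segment p q" "black m n"
      "midpoint p q = face_center m n"
    and cases: "(snd p = snd q \<and> \<omega> (m,n+1) = \<omega> (m+1,n+1) \<and> \<omega> (m,n) = \<omega> (m+1,n)
            \<and> \<omega> (m,n+1) \<noteq> \<omega> (m,n)) \<or>
         (fst p = fst q \<and> \<omega> (m,n) = \<omega> (m,n+1) \<and> \<omega> (m+1,n) = \<omega> (m+1,n+1)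
            \<and> \<omega> (m,n) \<noteq> \<omega> (m+1,n))"
    unfolding phi_def by blast
  have "dist p q = 2"
    using dist_ends_all_edges e by blast
  with e cases centered_horizontal_segment centered_vertical_segment
  show "(\<exists>m n. hedge_present \<omega> m n \<and> e = hedge m n) \<or> (\<exists>m n. vedge_present \<omega> m n \<and> e = vedge m n)"
    unfolding hedge_present_def vedge_present_def by metis
next
  assume "(\<exists>m n. hedge_present \<omega> m n \<and> e = hedge m n) \<or> (\<exists>m n. vedge_present \<omega> m n \<and> e = vedge m n)"
  then show "phi \<omega> e"
  proof (elim disjE exE conjE)
    fix m n assume "hedge_present \<omega> m n" "e = hedge m n"
    then show "phi \<omega> e"
      unfolding phi_def hedge_eq_segment
      using hedge_in_all_edges[of m n]
      by (intro conjI exI[of _ "(real_of_int m - 1/2, real_of_int n + 1/2)"]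
          exI[of _ "(real_of_int m + 3/2, real_of_int n + 1/2)"] exI[of _ m] exI[of _ n])
        (auto simp: hedge_present_def hedge_eq_segment midpoint_def face_center_def field_simps)
  next
    fix m n assume "vedge_present \<omega> m n" "e = vedge m n"
    then show "phi \<omega> e"
      unfolding phi_def vedge_eq_segment
      using vedge_in_all_edges[of m n]
      by (intro conjI exI[of _ "(real_of_int m + 1/2, real_of_int n - 1/2)"]
          exI[of _ "(real_of_int m + 1/2, real_of_int n + 3/2)"] exI[of _ m] exI[of _ n])
        (auto simp: vedge_present_def vedge_eq_segment midpoint_def face_center_def field_simps)
  qed
qed

definition contour_union :: "config \<Rightarrow> (real \<times> real) set" where
  "contour_union \<omega> = \<Union> (present_edges \<omega>)"

lemma contours_eq_components: "contours \<omega> = components (contour_union \<omega>)"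
  unfolding contours_def contour_union_def ..

lemma mem_contour_union:
  "x \<in> contour_union \<omega> \<longleftrightarrow>
     (\<exists>m n. hedge_present \<omega> m n \<and> x \<in> hedge m n \<or> vedge_present \<omega> m n \<and> x \<in> vedge m n)"
  unfolding contour_union_def present_edges_def phi_iff_present_edge by blast

lemma present_edge_subset_contour_union: "phi \<omega> e \<Longrightarrow> e \<subseteq> contour_union \<omega>"
  unfolding contour_union_def present_edges_def by blast

lemma present_edge_compact_connected: "phi \<omega> e \<Longrightarrow> compact e \<and> connected e \<and> e \<noteq> {}"
  unfolding phi_iff_present_edge hedge_eq_segment vedge_eq_segment by auto

lemma edge_subset_contour:
  assumes "C \<in> contours \<omega>" "phi \<omega> e" "p \<in> e" "p \<in> C"
  shows "e \<subseteq> C"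
  using assms present_edge_compact_connected[OF assms(2)] present_edge_subset_contour_union[OF assms(2)]
    components_maximal[of C "contour_union \<omega>" e]
  unfolding contours_eq_components by blast

lemma finite_lattice_points_in_bounded:
  assumes "bounded S"
  shows "finite {u. vpt u \<in> S}"
proof -
  obtain r where r: "\<And>x. x \<in> S \<Longrightarrow> norm x \<le> r"
    using assms unfolding bounded_iff by blast
  have "\<bar>fst u\<bar> \<le> \<lceil>r\<rceil> \<and> \<bar>snd u\<bar> \<le> \<lceil>r\<rceil>" if "vpt u \<in> S" for u
  proof -
    have "\<bar>real_of_int (fst u)\<bar> \<le> r" "\<bar>real_of_int (snd u)\<bar> \<le> r"
      using r[OF that] norm_fst_le[of "fst (vpt u)" "snd (vpt u)"] norm_snd_le[of "snd (vpt u)" "fst (vpt u)"]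
      by (auto simp: vpt_def)
    then show ?thesis
      by (auto simp: abs_le_iff) linarith+
  qed
  then have "{u. vpt u \<in> S} \<subseteq> {-\<lceil>r\<rceil>..\<lceil>r\<rceil>} \<times> {-\<lceil>r\<rceil>..\<lceil>r\<rceil>}"
    by (force simp: abs_le_iff)
  then show ?thesis
    by (rule finite_subset) simp
qed

lemma finite_near_bounded:
  assumes "bounded S" and near: "\<And>u. f u \<subseteq> cball (vpt u) r"
  shows "finite {u. f u \<inter> S \<noteq> {}}"
proof -
  obtain b where b: "\<And>x. x \<in> S \<Longrightarrow> norm x \<le> b"
    using assms(1) unfolding bounded_iff by blast
  have "{u. f u \<inter> S \<noteq> {}} \<subseteq> {u. vpt u \<in> cball 0 (b + r)}"
  proof
    fix u assume "u \<in> {u. f u \<inter> S \<noteq> {}}"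
    then obtain y where "y \<in> f u" "y \<in> S" by blast
    then have "dist (vpt u) y \<le> r" "norm y \<le> b"
      using near[of u] b[of y] by auto
    then show "u \<in> {u. vpt u \<in> cball 0 (b + r)}"
      using norm_triangle_ineq2[of "vpt u" y] by (simp add: dist_norm)
  qed
  then show ?thesis
    by (rule finite_subset[OF _ finite_lattice_points_in_bounded]) simp
qed

lemma hedge_subset_cball: "hedge m n \<subseteq> cball (vpt (m,n)) 2"
proof
  fix p assume "p \<in> hedge m n"
  then have "\<bar>fst (vpt (m,n)) - fst p\<bar> \<le> 3/2" "\<bar>snd (vpt (m,n)) - snd p\<bar> \<le> 1/2"
    unfolding hedge_def vpt_def abs_le_iff by auto
  then have "dist (vpt (m,n)) p \<le> 3/2 + 1/2"
    by (rule dist_le_coordinates)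
  then show "p \<in> cball (vpt (m,n)) 2"
    by simp
qed

lemma vedge_subset_cball: "vedge m n \<subseteq> cball (vpt (m,n)) 2"
proof
  fix p assume "p \<in> vedge m n"
  then have "\<bar>fst (vpt (m,n)) - fst p\<bar> \<le> 1/2" "\<bar>snd (vpt (m,n)) - snd p\<bar> \<le> 3/2"
    unfolding vedge_def vpt_def abs_le_iff by auto
  then have "dist (vpt (m,n)) p \<le> 1/2 + 3/2"
    by (rule dist_le_coordinates)
  then show "p \<in> cball (vpt (m,n)) 2"
    by simp
qed

lemma finite_present_edges_meeting_bounded:
  assumes "bounded S"
  shows "finite {e. phi \<omega> e \<and> e \<inter> S \<noteq> {}}"
proof -
  let ?H = "{u. case_prod hedge u \<inter> S \<noteq> {}}" and ?V = "{u. case_prod vedge u \<inter> S \<noteq> {}}"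
  have "case_prod hedge u \<subseteq> cball (vpt u) 2" "case_prod vedge u \<subseteq> cball (vpt u) 2" for u
    by (cases u; simp add: hedge_subset_cball vedge_subset_cball)+
  then have "finite ?H" "finite ?V"
    using finite_near_bounded[OF assms] by blast+
  moreover have "{e. phi \<omega> e \<and> e \<inter> S \<noteq> {}} \<subseteq> case_prod hedge ` ?H \<union> case_prod vedge ` ?V"
  proof
    fix e assume "e \<in> {e. phi \<omega> e \<and> e \<inter> S \<noteq> {}}"
    then obtain m n where "e \<inter> S \<noteq> {}" "e = hedge m n \<or> e = vedge m n"
      unfolding phi_iff_present_edge by blast
    then show "e \<in> case_prod hedge ` ?H \<union> case_prod vedge ` ?V"
      by (auto intro: rev_image_eqI[of "(m, n)"])
  qed
  ultimately show ?thesis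
    by (meson finite_UnI finite_imageI finite_subset)
qed

lemma closed_contour_union: "closed (contour_union \<omega>)"
  unfolding contour_union_def present_edges_def
proof (rule closed_Union_locally_finite)
  show "\<And>X. X \<in> {e. phi \<omega> e} \<Longrightarrow> closed X"
    using present_edge_compact_connected compact_imp_closed by blast
  show "\<And>x. finite {X \<in> {e. phi \<omega> e}. X \<inter> ball x 1 \<noteq> {}}"
    using finite_present_edges_meeting_bounded[OF bounded_ball] by simp
qed

lemma infinite_contour_unbounded:
  assumes "infinite_contour \<omega> C"
  shows "\<not> bounded C"
proof
  assume "bounded C"
  have "contour_edges \<omega> C \<subseteq> {e. phi \<omega> e \<and> e \<inter> C \<noteq> {}}"
    unfolding contour_edges_def present_edges_def using present_edge_compact_connected by fastforce
  then have "finite (contour_edges \<omega> C)"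
    using finite_present_edges_meeting_bounded[OF \<open>bounded C\<close>] by (rule finite_subset)
  then show False
    using assms unfolding infinite_contour_def by blast
qed

section \<open>Clusters as unions of unit squares\<close>

definition cell :: "vertex \<Rightarrow> (real \<times> real) set" where
  "cell u = {of_int (fst u) - 1/2 .. of_int (fst u) + 1/2} \<times> {of_int (snd u) - 1/2 .. of_int (snd u) + 1/2}"

definition cells :: "vertex set \<Rightarrow> (real \<times> real) set" where
  "cells A = \<Union> (cell ` A)"

lemma mem_cell:
  "p \<in> cell u \<longleftrightarrow> of_int (fst u) - 1/2 \<le> fst p \<and> fst p \<le> of_int (fst u) + 1/2
     \<and> of_int (snd u) - 1/2 \<le> snd p \<and> snd p \<le> of_int (snd u) + 1/2"
  by (cases p) (simp add: cell_def)

lemma vpt_in_cell: "vpt u \<in> cell u"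
  unfolding mem_cell vpt_def by simp

lemma compact_cell: "compact (cell u)"
  unfolding cell_def by (intro compact_Times) auto

lemma connected_cell: "connected (cell u)"
  unfolding cell_def by (intro convex_connected convex_Times) auto

lemma cell_subset_cball: "cell u \<subseteq> cball (vpt u) 1"
proof
  fix p assume "p \<in> cell u"
  then have "\<bar>fst (vpt u) - fst p\<bar> \<le> 1/2" "\<bar>snd (vpt u) - snd p\<bar> \<le> 1/2"
    unfolding mem_cell vpt_def abs_le_iff by auto
  then have "dist (vpt u) p \<le> 1/2 + 1/2"
    by (rule dist_le_coordinates)
  then show "p \<in> cball (vpt u) 1"
    by simp
qed

lemma closed_cells: "closed (cells A)"
  unfolding cells_def
proof (rule closed_Union_locally_finite)
  show "\<And>X. X \<in> cell ` A \<Longrightarrow> closed X"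
    using compact_cell compact_imp_closed by blast
  fix x
  have "{X \<in> cell ` A. X \<inter> ball x 1 \<noteq> {}} \<subseteq> cell ` {u. cell u \<inter> ball x 1 \<noteq> {}}"
    by auto
  then show "finite {X \<in> cell ` A. X \<inter> ball x 1 \<noteq> {}}"
    using finite_near_bounded[OF bounded_ball cell_subset_cball] finite_subset by blast
qed

lemma compact_cells: "finite A \<Longrightarrow> compact (cells A)"
  unfolding cells_def using compact_cell by blast

lemma cells_Un_cells_Compl: "cells A \<union> cells (- A) = UNIV"
proof -
  have "p \<in> cell (round (fst p), round (snd p))" for p
    using of_int_round_abs_le[of "fst p"] of_int_round_abs_le[of "snd p"]
    unfolding mem_cell abs_le_iff by auto
  then show ?thesis
    unfolding cells_def by blast
qed

lemma closure_Compl_cells: "closure (- cells A) \<subseteq> cells (- A)"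
  using closure_minimal[OF _ closed_cells] cells_Un_cells_Compl by blast

lemma cells_meet_imp_close:
  assumes "p \<in> cell u" "p \<in> cell w"
  shows "\<bar>fst u - fst w\<bar> \<le> 1" "\<bar>snd u - snd w\<bar> \<le> 1"
proof -
  have "of_int \<bar>fst u - fst w\<bar> \<le> (1::real)" "of_int \<bar>snd u - snd w\<bar> \<le> (1::real)"
    using assms unfolding mem_cell by (auto simp: abs_le_iff)
  then show "\<bar>fst u - fst w\<bar> \<le> 1" "\<bar>snd u - snd w\<bar> \<le> 1"
    by (simp_all only: of_int_le_1_iff)
qed

lemma grid_adj_sym: "grid_adj u w \<Longrightarrow> grid_adj w u"
  unfolding grid_adj_def by (simp add: abs_minus_commute)

lemma midpoint_in_cell:
  assumes "grid_adj u w"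
  shows "midpoint (vpt u) (vpt w) \<in> cell u"
proof -
  have "\<bar>fst u - fst w\<bar> \<le> 1" "\<bar>snd u - snd w\<bar> \<le> 1"
    using assms unfolding grid_adj_def by linarith+
  then have "\<bar>real_of_int (fst u) - of_int (fst w)\<bar> \<le> 1" "\<bar>real_of_int (snd u) - of_int (snd w)\<bar> \<le> 1"
    by (metis of_int_abs of_int_diff of_int_le_1_iff)+
  then show ?thesis
    unfolding mem_cell midpoint_def vpt_def by (auto simp: abs_le_iff)
qed

lemma grid_adj_cells_meet:
  assumes "grid_adj u w"
  shows "cell u \<inter> cell w \<noteq> {}"
proof -
  have "midpoint (vpt u) (vpt w) \<in> cell w"
    using midpoint_in_cell[OF grid_adj_sym[OF assms]] by (simp only: midpoint_sym)
  then show ?thesis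
    using midpoint_in_cell[OF assms] by blast
qed

lemma Omega_face_allowed:
  "\<omega> \<in> Omega \<Longrightarrow> black m n \<Longrightarrow> (\<omega> (m,n), \<omega> (m,n+1), \<omega> (m+1,n+1), \<omega> (m+1,n)) \<in> allowed"
  unfolding Omega_def by blast

lemma hedge_present_between:
  assumes "\<omega> \<in> Omega" "\<omega> (a,b) \<noteq> \<omega> (a,b+1)"
  shows "\<exists>i \<in> {a - 1, a}. hedge_present \<omega> i b"
proof (cases "black a b")
  case True
  then show ?thesis
    using Omega_face_allowed[OF assms(1) True] assms(2) unfolding allowed_def hedge_present_def by auto
next
  case False
  then have "black (a - 1) b"
    unfolding black_def by simp
  then show ?thesis
    using Omega_face_allowed[OF assms(1), of "a - 1" b] assms(2) unfolding allowed_def hedge_present_def by auto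
qed

lemma vedge_present_between:
  assumes "\<omega> \<in> Omega" "\<omega> (a,b) \<noteq> \<omega> (a+1,b)"
  shows "\<exists>j \<in> {b - 1, b}. vedge_present \<omega> a j"
proof (cases "black a b")
  case True
  then show ?thesis
    using Omega_face_allowed[OF assms(1) True] assms(2) unfolding allowed_def vedge_present_def by auto
next
  case False
  then have "black a (b - 1)"
    unfolding black_def by simp
  then show ?thesis
    using Omega_face_allowed[OF assms(1), of a "b - 1"] assms(2) unfolding allowed_def vedge_present_def by auto
qed

lemma horizontal_side_in_contour_union:
  assumes "\<omega> \<in> Omega" "\<omega> (a,b) \<noteq> \<omega> (a,b+1)"
    and "snd q = of_int b + 1/2" "of_int a - 1/2 \<le> fst q" "fst q \<le> of_int a + 1/2"
  shows "q \<in> contour_union \<omega>"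
proof -
  obtain i where "i \<in> {a - 1, a}" "hedge_present \<omega> i b"
    using hedge_present_between[OF assms(1,2)] by blast
  moreover from this have "q \<in> hedge i b"
    using assms(3-5) unfolding hedge_def by auto
  ultimately show ?thesis
    unfolding mem_contour_union by blast
qed

lemma vertical_side_in_contour_union:
  assumes "\<omega> \<in> Omega" "\<omega> (a,b) \<noteq> \<omega> (a+1,b)"
    and "fst q = of_int a + 1/2" "of_int b - 1/2 \<le> snd q" "snd q \<le> of_int b + 1/2"
  shows "q \<in> contour_union \<omega>"
proof -
  obtain j where "j \<in> {b - 1, b}" "vedge_present \<omega> a j"
    using vedge_present_between[OF assms(1,2)] by blast
  moreover from this have "q \<in> vedge a j"
    using assms(3-5) unfolding vedge_def by auto
  ultimately show ?thesis
    unfolding mem_contour_union by blast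
qed

lemma common_side_in_contour_union:
  assumes O: "\<omega> \<in> Omega" and adj: "grid_adj u w" and ne: "\<omega> u \<noteq> \<omega> w"
    and p: "p \<in> cell u" "p \<in> cell w"
  shows "p \<in> contour_union \<omega>"
proof -
  obtain a b c d where uw: "u = (a,b)" "w = (c,d)"
    by (cases u, cases w)
  have bounds: "of_int a - 1/2 \<le> fst p" "fst p \<le> of_int a + 1/2" "of_int b - 1/2 \<le> snd p" "snd p \<le> of_int b + 1/2"
      "of_int c - 1/2 \<le> fst p" "fst p \<le> of_int c + 1/2" "of_int d - 1/2 \<le> snd p" "snd p \<le> of_int d + 1/2"
    using p unfolding uw mem_cell by auto
  consider "c = a + 1" "d = b" | "a = c + 1" "d = b" | "c = a" "d = b + 1" | "c = a" "b = d + 1"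
    using adj unfolding uw grid_adj_def by fastforce
  then show ?thesis
  proof cases
    case 1
    with bounds ne uw show ?thesis
      by (intro vertical_side_in_contour_union[OF O, of a b]) auto
  next
    case 2
    with bounds ne uw show ?thesis
      by (intro vertical_side_in_contour_union[OF O, of c d]) auto
  next
    case 3
    with bounds ne uw show ?thesis
      by (intro horizontal_side_in_contour_union[OF O, of a b]) auto
  next
    case 4
    with bounds ne uw show ?thesis
      by (intro horizontal_side_in_contour_union[OF O, of c d]) auto
  qed
qed

abbreviation reach :: "config \<Rightarrow> vertex \<Rightarrow> vertex \<Rightarrow> bool" where
  "reach \<omega> \<equiv> (same_step \<omega>)\<^sup>*\<^sup>*"

lemma reach_if_adj_same:
  assumes "u = w \<or> grid_adj u w" "\<omega> u = \<omega> w"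
  shows "reach \<omega> u w"
  using assms unfolding same_step_def by auto

lemma cells_meet_in_contour_union:
  assumes O: "\<omega> \<in> Omega" and p: "p \<in> cell u" "p \<in> cell w" and nr: "\<not> reach \<omega> u w"
  shows "p \<in> contour_union \<omega>"
proof -
  \<comment> \<open>Squares meeting only at a corner are handled through the square of \<open>z\<close>, which shares a
    side with both.\<close>
  define z where "z = (fst w, snd u)"
  have "p \<in> cell z"
    using p unfolding z_def mem_cell by simp
  have "\<bar>fst u - fst w\<bar> \<le> 1" "\<bar>snd u - snd w\<bar> \<le> 1"
    using cells_meet_imp_close[OF p] by auto
  then have uz: "u = z \<or> grid_adj u z" and zw: "z = w \<or> grid_adj z w"
    unfolding z_def grid_adj_def by (auto simp: prod_eq_iff)
  have "reach \<omega> u w" if "\<omega> u = \<omega> z" "\<omega> z = \<omega> w"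
    using reach_if_adj_same[OF uz that(1)] reach_if_adj_same[OF zw that(2)] by (rule rtranclp_trans)
  with nr have "\<omega> u \<noteq> \<omega> z \<or> \<omega> z \<noteq> \<omega> w"
    by blast
  then show ?thesis
    using common_side_in_contour_union[OF O _ _ p(1) \<open>p \<in> cell z\<close>]
      common_side_in_contour_union[OF O _ _ \<open>p \<in> cell z\<close> p(2)] uz zw by blast
qed

definition step_closed :: "config \<Rightarrow> vertex set \<Rightarrow> bool" where
  "step_closed \<omega> A \<longleftrightarrow> (\<forall>u w. u \<in> A \<longrightarrow> same_step \<omega> u w \<longrightarrow> w \<in> A)"

lemma step_closed_reach:
  assumes "step_closed \<omega> A" "u \<in> A" "reach \<omega> u w"
  shows "w \<in> A"
  using assms(3) by induction (use assms(1,2) in \<open>auto simp: step_closed_def\<close>)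

lemma step_closed_cluster: "cluster \<omega> \<xi> \<Longrightarrow> step_closed \<omega> \<xi>"
  unfolding cluster_def step_closed_def by (auto intro: rtranclp.rtrancl_into_rtrancl)

lemma step_closed_Union: "(\<And>\<xi>. \<xi> \<in> X \<Longrightarrow> step_closed \<omega> \<xi>) \<Longrightarrow> step_closed \<omega> (\<Union>X)"
  unfolding step_closed_def by blast

lemma frontier_cells_subset_contour_union:
  assumes O: "\<omega> \<in> Omega" and "step_closed \<omega> A"
  shows "frontier (cells A) \<subseteq> contour_union \<omega>"
proof
  fix p assume "p \<in> frontier (cells A)"
  then have "p \<in> cells A" "p \<in> cells (- A)"
    using closed_cells closure_Compl_cells unfolding frontier_closures by auto
  then obtain u w where "u \<in> A" "w \<notin> A" "p \<in> cell u" "p \<in> cell w"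
    unfolding cells_def by auto
  moreover have "\<not> reach \<omega> u w"
    using step_closed_reach[OF assms(2) \<open>u \<in> A\<close>] \<open>w \<notin> A\<close> by blast
  ultimately show "p \<in> contour_union \<omega>"
    using cells_meet_in_contour_union[OF O] by blast
qed

lemma connected_cells_cluster:
  assumes "cluster \<omega> \<xi>"
  shows "connected (cells \<xi>)"
proof -
  obtain v where "\<xi> = {w. reach \<omega> v w}"
    using assms unfolding cluster_def by blast
  moreover have "cell u \<inter> cell w \<noteq> {}" if "same_step \<omega> u w" for u w
    using that grid_adj_cells_meet unfolding same_step_def by blast
  ultimately show ?thesis
    unfolding cells_def
    using connected_Union_rtranclp[where f = cell and R = "same_step \<omega>" and v = v, OF connected_cell]
      vpt_in_cell by blast
qed

lemma cluster_monochromatic: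
  assumes "\<omega> \<in> Omega" "cluster \<omega> \<xi>"
  shows "(\<forall>v\<in>\<xi>. \<omega> v = 0) \<or> (\<forall>v\<in>\<xi>. \<omega> v = 1)"
proof -
  obtain v0 where \<xi>: "\<xi> = {w. reach \<omega> v0 w}"
    using assms(2) unfolding cluster_def by blast
  have "\<omega> w = \<omega> v0" if "reach \<omega> v0 w" for w
    using that by (induction rule: rtranclp_induct) (simp_all add: same_step_def)
  moreover have "\<omega> v0 = 0 \<or> \<omega> v0 = 1"
    using assms(1) unfolding Omega_def by blast
  ultimately show ?thesis
    unfolding \<xi> by (metis mem_Collect_eq)
qed

section \<open>Incidence\<close>

lemma incident_via_hedge:
  assumes "hedge_present \<omega> m n" "hedge m n \<subseteq> C" "w \<in> \<xi>" "fst w \<in> {m, m+1}" "snd w \<in> {n, n+1}"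
  shows "incident \<omega> \<xi> C"
proof -
  have "infdist (vpt w) (hedge m n) = 1/2"
  proof (rule infdist_eqI)
    show "(of_int (fst w), of_int n + 1/2) \<in> hedge m n"
      using assms(4) unfolding hedge_def by auto
    show "dist (vpt w) (of_int (fst w), of_int n + 1/2) = 1/2"
      using assms(5) by (auto simp: vpt_def dist_Pair_Pair dist_real_def)
    fix y assume "y \<in> hedge m n"
    then have "\<bar>snd (vpt w) - snd y\<bar> = 1/2"
      using assms(5) unfolding hedge_def vpt_def by auto
    then show "1/2 \<le> dist (vpt w) y"
      using dist_snd_le[of "vpt w" y] by (simp add: dist_real_def)
  qed
  moreover have "hedge m n \<in> contour_edges \<omega> C"
    using assms(1,2) phi_iff_present_edge unfolding contour_edges_def present_edges_def by blast
  ultimately show ?thesis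
    using assms(3) unfolding incident_def by blast
qed

lemma incident_via_vedge:
  assumes "vedge_present \<omega> m n" "vedge m n \<subseteq> C" "w \<in> \<xi>" "fst w \<in> {m, m+1}" "snd w \<in> {n, n+1}"
  shows "incident \<omega> \<xi> C"
proof -
  have "infdist (vpt w) (vedge m n) = 1/2"
  proof (rule infdist_eqI)
    show "(of_int m + 1/2, of_int (snd w)) \<in> vedge m n"
      using assms(5) unfolding vedge_def by auto
    show "dist (vpt w) (of_int m + 1/2, of_int (snd w)) = 1/2"
      using assms(4) by (auto simp: vpt_def dist_Pair_Pair dist_real_def)
    fix y assume "y \<in> vedge m n"
    then have "\<bar>fst (vpt w) - fst y\<bar> = 1/2"
      using assms(4) unfolding vedge_def vpt_def by auto
    then show "1/2 \<le> dist (vpt w) y"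
      using dist_fst_le[of "vpt w" y] by (simp add: dist_real_def)
  qed
  moreover have "vedge m n \<in> contour_edges \<omega> C"
    using assms(1,2) phi_iff_present_edge unfolding contour_edges_def present_edges_def by blast
  ultimately show ?thesis
    using assms(3) unfolding incident_def by blast
qed

lemma incident_imp_cells_meet:
  assumes "incident \<omega> \<xi> C"
  shows "cells \<xi> \<inter> C \<noteq> {}"
proof -
  obtain v e where v: "v \<in> \<xi>" "e \<in> contour_edges \<omega> C" "infdist (vpt v) e = 1/2"
    using assms unfolding incident_def by blast
  then have "phi \<omega> e" "e \<subseteq> C"
    unfolding contour_edges_def present_edges_def by auto
  then obtain y where y: "y \<in> e" "\<And>z. z \<in> e \<Longrightarrow> dist (vpt v) y \<le> dist (vpt v) z"
    using distance_attains_inf[of e "vpt v"] present_edge_compact_connected compact_imp_closed by metis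
  have "dist (vpt v) y = 1/2"
    using infdist_eqI[OF y(1) refl y(2)] v(3) by simp
  then have "y \<in> cell v"
    using dist_fst_le[of "vpt v" y] dist_snd_le[of "vpt v" y]
    unfolding mem_cell vpt_def by (auto simp: dist_real_def abs_le_iff)
  then show ?thesis
    using v(1) y(1) \<open>e \<subseteq> C\<close> unfolding cells_def by blast
qed

lemma incident_or_across_vertical_side:
  assumes O: "\<omega> \<in> Omega" and \<xi>: "cluster \<omega> \<xi>" and C: "C \<in> contours \<omega>"
    and p: "p \<in> C" "fst p = of_int a + 1/2" "of_int b - 1/2 \<le> snd p" "snd p \<le> of_int b + 1/2"
    and uw: "{u, w} = {(a,b), (a+1,b)}" and "u \<in> \<xi>"
  shows "w \<in> \<xi> \<or> incident \<omega> \<xi> C"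
proof (cases "\<omega> (a,b) = \<omega> (a+1,b)")
  case True
  then have "same_step \<omega> u w"
    using uw unfolding same_step_def grid_adj_def by (auto simp: doubleton_eq_iff)
  then show ?thesis
    using step_closed_cluster[OF \<xi>] \<open>u \<in> \<xi>\<close> unfolding step_closed_def by blast
next
  case False
  obtain j where j: "j \<in> {b - 1, b}" "vedge_present \<omega> a j"
    using vedge_present_between[OF O False] by blast
  then have "p \<in> vedge a j"
    using p unfolding vedge_def by auto
  then have "vedge a j \<subseteq> C"
    using edge_subset_contour[OF C _ _ p(1)] j(2) phi_iff_present_edge by blast
  moreover have "fst u \<in> {a, a+1}" "snd u \<in> {j, j+1}"
    using uw j(1) by (auto simp: doubleton_eq_iff)
  ultimately show ?thesis
    using incident_via_vedge[OF j(2) _ \<open>u \<in> \<xi>\<close>] by blast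
qed

lemma incident_or_across_horizontal_side:
  assumes O: "\<omega> \<in> Omega" and \<xi>: "cluster \<omega> \<xi>" and C: "C \<in> contours \<omega>"
    and p: "p \<in> C" "snd p = of_int b + 1/2" "of_int a - 1/2 \<le> fst p" "fst p \<le> of_int a + 1/2"
    and uw: "{u, w} = {(a,b), (a,b+1)}" and "u \<in> \<xi>"
  shows "w \<in> \<xi> \<or> incident \<omega> \<xi> C"
proof (cases "\<omega> (a,b) = \<omega> (a,b+1)")
  case True
  then have "same_step \<omega> u w"
    using uw unfolding same_step_def grid_adj_def by (auto simp: doubleton_eq_iff)
  then show ?thesis
    using step_closed_cluster[OF \<xi>] \<open>u \<in> \<xi>\<close> unfolding step_closed_def by blast
next
  case False
  obtain i where i: "i \<in> {a - 1, a}" "hedge_present \<omega> i b"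
    using hedge_present_between[OF O False] by blast
  then have "p \<in> hedge i b"
    using p unfolding hedge_def by auto
  then have "hedge i b \<subseteq> C"
    using edge_subset_contour[OF C _ _ p(1)] i(2) phi_iff_present_edge by blast
  moreover have "fst u \<in> {i, i+1}" "snd u \<in> {b, b+1}"
    using uw i(1) by (auto simp: doubleton_eq_iff)
  ultimately show ?thesis
    using incident_via_hedge[OF i(2) _ \<open>u \<in> \<xi>\<close>] by blast
qed

lemma incident_if_hedge_meets_cell:
  assumes O: "\<omega> \<in> Omega" and \<xi>: "cluster \<omega> \<xi>" and C: "C \<in> contours \<omega>"
    and e: "hedge_present \<omega> m n" "hedge m n \<subseteq> C" and p: "p \<in> hedge m n" "p \<in> cell u" and "u \<in> \<xi>"
  shows "incident \<omega> \<xi> C"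
proof -
  obtain u1 u2 where u: "u = (u1, u2)"
    by (cases u)
  have bounds: "snd p = of_int n + 1/2" "of_int m - 1/2 \<le> fst p" "fst p \<le> of_int m + 3/2"
      "of_int u1 - 1/2 \<le> fst p" "fst p \<le> of_int u1 + 1/2" "of_int u2 - 1/2 \<le> snd p" "snd p \<le> of_int u2 + 1/2"
    using p unfolding u hedge_def mem_cell by auto
  have "u2 \<le> n + 1" "n \<le> u2" "u1 \<le> m + 2" "m - 1 \<le> u1"
    by (rule int_le_if_of_int_less; use bounds in simp; linarith)+
  then have u2: "u2 \<in> {n, n+1}" and "u1 \<in> {m, m+1} \<or> u1 = m - 1 \<or> u1 = m + 2"
    by auto
  then consider "u1 \<in> {m, m+1}" | "u1 = m - 1" | "u1 = m + 2"
    by blast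
  then show ?thesis
  proof cases
    case 1
    then show ?thesis
      using incident_via_hedge[OF e \<open>u \<in> \<xi>\<close>] u u2 by simp
  next
    case 2
    then have "(m, u2) \<in> \<xi> \<or> incident \<omega> \<xi> C"
      using bounds u \<open>u \<in> \<xi>\<close> by (intro incident_or_across_vertical_side[OF O \<xi> C, of p "m - 1" u2]) (auto intro: e(2)[THEN subsetD, OF p(1)])
    then show ?thesis
      using incident_via_hedge[OF e] u2 by auto
  next
    case 3
    then have "(m + 1, u2) \<in> \<xi> \<or> incident \<omega> \<xi> C"
      using bounds u \<open>u \<in> \<xi>\<close> by (intro incident_or_across_vertical_side[OF O \<xi> C, of p "m + 1" u2]) (auto intro: e(2)[THEN subsetD, OF p(1)])
    then show ?thesis
      using incident_via_hedge[OF e] u2 by auto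
  qed
qed

lemma incident_if_vedge_meets_cell:
  assumes O: "\<omega> \<in> Omega" and \<xi>: "cluster \<omega> \<xi>" and C: "C \<in> contours \<omega>"
    and e: "vedge_present \<omega> m n" "vedge m n \<subseteq> C" and p: "p \<in> vedge m n" "p \<in> cell u" and "u \<in> \<xi>"
  shows "incident \<omega> \<xi> C"
proof -
  obtain u1 u2 where u: "u = (u1, u2)"
    by (cases u)
  have bounds: "fst p = of_int m + 1/2" "of_int n - 1/2 \<le> snd p" "snd p \<le> of_int n + 3/2"
      "of_int u1 - 1/2 \<le> fst p" "fst p \<le> of_int u1 + 1/2" "of_int u2 - 1/2 \<le> snd p" "snd p \<le> of_int u2 + 1/2"
    using p unfolding u vedge_def mem_cell by auto
  have "u1 \<le> m + 1" "m \<le> u1" "u2 \<le> n + 2" "n - 1 \<le> u2"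
    by (rule int_le_if_of_int_less; use bounds in simp; linarith)+
  then have u1: "u1 \<in> {m, m+1}" and "u2 \<in> {n, n+1} \<or> u2 = n - 1 \<or> u2 = n + 2"
    by auto
  then consider "u2 \<in> {n, n+1}" | "u2 = n - 1" | "u2 = n + 2"
    by blast
  then show ?thesis
  proof cases
    case 1
    then show ?thesis
      using incident_via_vedge[OF e \<open>u \<in> \<xi>\<close>] u u1 by simp
  next
    case 2
    then have "(u1, n) \<in> \<xi> \<or> incident \<omega> \<xi> C"
      using bounds u \<open>u \<in> \<xi>\<close> by (intro incident_or_across_horizontal_side[OF O \<xi> C, of p "n - 1" u1]) (auto intro: e(2)[THEN subsetD, OF p(1)])
    then show ?thesis
      using incident_via_vedge[OF e] u1 by auto
  next
    case 3
    then have "(u1, n + 1) \<in> \<xi> \<or> incident \<omega> \<xi> C"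
      using bounds u \<open>u \<in> \<xi>\<close> by (intro incident_or_across_horizontal_side[OF O \<xi> C, of p "n + 1" u1]) (auto intro: e(2)[THEN subsetD, OF p(1)])
    then show ?thesis
      using incident_via_vedge[OF e] u1 by auto
  qed
qed

lemma cells_meet_imp_incident:
  assumes O: "\<omega> \<in> Omega" and \<xi>: "cluster \<omega> \<xi>" and C: "C \<in> contours \<omega>" and "cells \<xi> \<inter> C \<noteq> {}"
  shows "incident \<omega> \<xi> C"
proof -
  obtain p u where p: "p \<in> cell u" "u \<in> \<xi>" "p \<in> C"
    using assms(4) unfolding cells_def by blast
  have "p \<in> contour_union \<omega>"
    using p(3) C in_components_subset unfolding contours_eq_components by blast
  then obtain m n where "hedge_present \<omega> m n \<and> p \<in> hedge m n \<or> vedge_present \<omega> m n \<and> p \<in> vedge m n"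
    unfolding mem_contour_union by blast
  then show ?thesis
  proof (elim disjE conjE)
    assume "hedge_present \<omega> m n" "p \<in> hedge m n"
    moreover from this have "hedge m n \<subseteq> C"
      using edge_subset_contour[OF C _ _ p(3)] phi_iff_present_edge by blast
    ultimately show ?thesis
      using incident_if_hedge_meets_cell[OF O \<xi> C] p by blast
  next
    assume "vedge_present \<omega> m n" "p \<in> vedge m n"
    moreover from this have "vedge m n \<subseteq> C"
      using edge_subset_contour[OF C _ _ p(3)] phi_iff_present_edge by blast
    ultimately show ?thesis
      using incident_if_vedge_meets_cell[OF O \<xi> C] p by blast
  qed
qed

section \<open>Clusters touching infinite contours\<close>

lemma finite_cluster_meets_one_unbounded_contour:
  assumes O: "\<omega> \<in> Omega" and \<xi>: "cluster \<omega> \<xi>" "finite \<xi>"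
    and C: "C1 \<in> contours \<omega>" "C2 \<in> contours \<omega>" "\<not> bounded C1" "\<not> bounded C2"
    and meet: "cells \<xi> \<inter> C1 \<noteq> {}" "cells \<xi> \<inter> C2 \<noteq> {}"
  shows "C1 = C2"
proof (rule unbounded_components_meeting_bounded_connected_eq)
  show "2 \<le> DIM(real \<times> real)"
    by simp
  show "connected (cells \<xi>)"
    using connected_cells_cluster[OF \<xi>(1)] .
  show "bounded (cells \<xi>)"
    using compact_imp_bounded[OF compact_cells[OF \<xi>(2)]] .
  show "frontier (cells \<xi>) \<subseteq> contour_union \<omega>"
    using frontier_cells_subset_contour_union[OF O step_closed_cluster[OF \<xi>(1)]] .
qed (use C meet in \<open>simp_all add: contours_eq_components\<close>)

lemma connected_Un_cells_meeting:
  assumes "connected C" "C \<noteq> {}" and "\<And>\<xi>. \<xi> \<in> X \<Longrightarrow> cluster \<omega> \<xi> \<and> cells \<xi> \<inter> C \<noteq> {}"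
  shows "connected (C \<union> cells (\<Union>X))"
proof -
  have "C \<union> cells (\<Union>X) = \<Union> (insert C ((\<lambda>\<xi>. C \<union> cells \<xi>) ` X))"
    unfolding cells_def by blast
  moreover have "connected (\<Union> (insert C ((\<lambda>\<xi>. C \<union> cells \<xi>) ` X)))"
  proof (rule connected_Union)
    show "connected S" if "S \<in> insert C ((\<lambda>\<xi>. C \<union> cells \<xi>) ` X)" for S
      using that assms(1,3) connected_Un[OF assms(1) connected_cells_cluster] by blast
    show "\<Inter> (insert C ((\<lambda>\<xi>. C \<union> cells \<xi>) ` X)) \<noteq> {}"
      using assms(2) by blast
  qed
  ultimately show ?thesis
    by simp
qed

lemma frontier_contour_Un_cells:
  assumes O: "\<omega> \<in> Omega" and "C \<in> contours \<omega>" "step_closed \<omega> A"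
  shows "frontier (C \<union> cells A) \<subseteq> contour_union \<omega>"
proof -
  have "frontier C \<subseteq> contour_union \<omega>"
    using assms(2) closed_components[OF closed_contour_union] frontier_subset_closed in_components_subset
    unfolding contours_eq_components by blast
  then show ?thesis
    using frontier_Un_subset frontier_cells_subset_contour_union[OF O assms(3)] by blast
qed

lemma closure_Compl_cells_in_cell_of_other_cluster:
  assumes "p \<in> closure (- cells A)"
  shows "\<exists>\<xi>. cluster \<omega> \<xi> \<and> p \<in> cells \<xi> \<and> \<not> \<xi> \<subseteq> A"
proof -
  obtain u where "u \<notin> A" "p \<in> cell u"
    using assms closure_Compl_cells unfolding cells_def by blast
  moreover have "cluster \<omega> {w. reach \<omega> u w}" "u \<in> {w. reach \<omega> u w}"
    unfolding cluster_def by blast+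
  ultimately show ?thesis
    unfolding cells_def by blast
qed

lemma infinite_cluster_meets_unbounded_contour:
  assumes O: "\<omega> \<in> Omega"
    and C: "C1 \<in> contours \<omega>" "C2 \<in> contours \<omega>" "C1 \<noteq> C2" "\<not> bounded C1" "\<not> bounded C2"
  shows "\<exists>\<xi>. cluster \<omega> \<xi> \<and> infinite \<xi> \<and> cells \<xi> \<inter> C1 \<noteq> {}"
proof (rule ccontr)
  assume no_infinite: "\<not> ?thesis"
  define X where "X = {\<xi>. cluster \<omega> \<xi> \<and> cells \<xi> \<inter> C1 \<noteq> {}}"
  define T where "T = C1 \<union> cells (\<Union>X)"
  have X: "cluster \<omega> \<xi>" "cells \<xi> \<inter> C1 \<noteq> {}" "finite \<xi>" if "\<xi> \<in> X" for \<xi>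
    using that no_infinite unfolding X_def by auto
  have C1c: "C1 \<in> components (contour_union \<omega>)" and C2c: "C2 \<in> components (contour_union \<omega>)"
    using C unfolding contours_eq_components by auto
  have "closed T"
    unfolding T_def using closed_components[OF closed_contour_union C1c] closed_cells by blast
  have "connected T"
    unfolding T_def using in_components_connected[OF C1c] in_components_nonempty[OF C1c] X
    by (intro connected_Un_cells_meeting) auto
  have "frontier T \<subseteq> contour_union \<omega>"
    unfolding T_def using X(1) step_closed_cluster
    by (intro frontier_contour_Un_cells[OF O C(1)] step_closed_Union) blast
  have "\<not> bounded T"
    unfolding T_def using C(4) bounded_subset by blast
  have "cells \<xi> \<inter> C2 = {}" if "\<xi> \<in> X" for \<xi>
    using finite_cluster_meets_one_unbounded_contour[OF O X(1,3)[OF that] C(1,2,4,5) X(2)[OF that]] C(3)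
    by blast
  then have "C2 \<inter> T = {}"
    unfolding T_def cells_def using components_nonoverlap[OF C1c C2c] C(3) by blast
  obtain c2 where "c2 \<in> C2"
    using in_components_nonempty[OF C2c] by blast
  define V where "V = connected_component_set (- T) c2"
  have V: "V \<in> components (- T)"
    unfolding V_def using \<open>c2 \<in> C2\<close> \<open>C2 \<inter> T = {}\<close> by (intro componentsI) blast
  have "C2 \<subseteq> V"
    unfolding V_def using \<open>c2 \<in> C2\<close> \<open>C2 \<inter> T = {}\<close> in_components_connected[OF C2c]
    by (intro connected_component_maximal) auto
  then have "\<not> bounded V"
    using C(5) bounded_subset by blast
  then obtain D where D: "D \<in> contours \<omega>" "\<not> bounded D" "frontier V \<subseteq> D" "frontier V \<noteq> {}"
    using frontier_component_in_unbounded_component[OF _ \<open>connected T\<close> \<open>\<not> bounded T\<close>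
        \<open>frontier T \<subseteq> contour_union \<omega>\<close> V]
    unfolding contours_eq_components by auto
  then obtain f where f: "f \<in> frontier V" "f \<in> D"
    by blast
  have "f \<in> closure (- cells (\<Union>X))"
    using f closure_mono[of V "- cells (\<Union>X)"] in_components_subset[OF V]
    unfolding T_def frontier_def by blast
  then obtain \<eta> where "cluster \<omega> \<eta>" "f \<in> cells \<eta>" "\<not> \<eta> \<subseteq> \<Union>X"
    using closure_Compl_cells_in_cell_of_other_cluster by blast
  then have "f \<notin> C1"
    unfolding X_def by blast
  moreover have "f \<in> T"
    using frontier_of_components_closed_complement[OF \<open>closed T\<close> V] f by blast
  ultimately obtain \<xi> where "\<xi> \<in> X" "f \<in> cells \<xi>"
    unfolding T_def cells_def by blast
  then have "D = C1"
    using finite_cluster_meets_one_unbounded_contour[OF O X(1,3) D(1) C(1) D(2) C(4) _ X(2)] f(2)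
    by blast
  then show False
    using \<open>f \<notin> C1\<close> f(2) by blast
qed

section \<open>Paths avoiding contours\<close>

definition open_cell :: "vertex \<Rightarrow> (real \<times> real) set" where
  "open_cell u = {of_int (fst u) - 1/2 <..< of_int (fst u) + 1/2} \<times> {of_int (snd u) - 1/2 <..< of_int (snd u) + 1/2}"

lemma vpt_in_open_cell: "vpt u \<in> open_cell u"
  unfolding open_cell_def vpt_def by auto

lemma open_cell_disjoint_contour_union: "open_cell u \<inter> contour_union \<omega> = {}"
proof -
  have "q \<notin> hedge m n" "q \<notin> vedge m n" if "q \<in> open_cell u" for q m n
    using that no_half_integer_strictly_near_integer[of "snd u" "snd q" n]
      no_half_integer_strictly_near_integer[of "fst u" "fst q" m]
    unfolding open_cell_def hedge_def vedge_def by (auto simp: mem_Times_iff)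
  then show ?thesis
    by (auto simp: mem_contour_union)
qed

lemma segment_to_point_of_cell:
  assumes "p \<in> cell v"
  shows "closed_segment (vpt v) p \<subseteq> open_cell v \<union> {p}"
proof
  fix q assume "q \<in> closed_segment (vpt v) p"
  then obtain t where t: "0 \<le> t" "t \<le> 1" "q = (1 - t) *\<^sub>R vpt v + t *\<^sub>R p"
    unfolding closed_segment_def by blast
  show "q \<in> open_cell v \<union> {p}"
  proof (cases "t = 1")
    case True
    then show ?thesis
      using t by simp
  next
    case False
    then have "t < 1"
      using t(2) by simp
    have "fst q = of_int (fst v) + t * (fst p - of_int (fst v))" "snd q = of_int (snd v) + t * (snd p - of_int (snd v))"
      using t(3) unfolding vpt_def by (auto simp: algebra_simps)
    have shrink: "\<bar>t * x\<bar> < 1/2" if "\<bar>x\<bar> \<le> 1/2" for x :: real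
    proof -
      have "t * \<bar>x\<bar> \<le> t * (1/2)"
        by (rule mult_left_mono[OF that t(1)])
      then show ?thesis
        using \<open>t < 1\<close> t(1) by (simp add: abs_mult)
    qed
    moreover have "\<bar>fst p - of_int (fst v)\<bar> \<le> 1/2" "\<bar>snd p - of_int (snd v)\<bar> \<le> 1/2"
      using assms unfolding mem_cell abs_le_iff by auto
    ultimately have "\<bar>t * (fst p - of_int (fst v))\<bar> < 1/2" "\<bar>t * (snd p - of_int (snd v))\<bar> < 1/2"
      by blast+
    moreover have "fst q = of_int (fst v) + t * (fst p - of_int (fst v))"
        "snd q = of_int (snd v) + t * (snd p - of_int (snd v))"
      using t(3) unfolding vpt_def by (auto simp: algebra_simps)
    ultimately show ?thesis
      unfolding open_cell_def abs_less_iff by (auto simp: mem_Times_iff)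
  qed
qed

lemma horizontal_midpoint_not_in_contour_union:
  assumes "\<omega> (a,b) = \<omega> (a+1,b)"
  shows "(of_int a + 1/2, of_int b) \<notin> contour_union \<omega>"
proof
  assume "(of_int a + 1/2, of_int b) \<in> contour_union \<omega>"
  then obtain m n where "hedge_present \<omega> m n \<and> (of_int a + 1/2, of_int b) \<in> hedge m n
      \<or> vedge_present \<omega> m n \<and> (of_int a + 1/2, of_int b) \<in> vedge m n"
    unfolding mem_contour_union by blast
  moreover have "real_of_int b \<noteq> of_int n + 1/2"
    by (rule no_half_integer_strictly_near_integer[of b]) auto
  ultimately have "vedge_present \<omega> a n" "of_int n - 1/2 \<le> real_of_int b" "real_of_int b \<le> of_int n + 3/2"
    unfolding hedge_def vedge_def by auto
  moreover from this have "b = n \<or> b = n + 1"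
    using int_le_if_of_int_less[of b "n + 1"] int_le_if_of_int_less[of n b] by force
  ultimately show False
    using assms unfolding vedge_present_def by auto
qed

lemma vertical_midpoint_not_in_contour_union:
  assumes "\<omega> (a,b) = \<omega> (a,b+1)"
  shows "(of_int a, of_int b + 1/2) \<notin> contour_union \<omega>"
proof
  assume "(of_int a, of_int b + 1/2) \<in> contour_union \<omega>"
  then obtain m n where "hedge_present \<omega> m n \<and> (of_int a, of_int b + 1/2) \<in> hedge m n
      \<or> vedge_present \<omega> m n \<and> (of_int a, of_int b + 1/2) \<in> vedge m n"
    unfolding mem_contour_union by blast
  moreover have "real_of_int a \<noteq> of_int m + 1/2"
    by (rule no_half_integer_strictly_near_integer[of a]) auto
  ultimately have "hedge_present \<omega> m b" "of_int m - 1/2 \<le> real_of_int a" "real_of_int a \<le> of_int m + 3/2"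
    unfolding hedge_def vedge_def by auto
  moreover from this have "a = m \<or> a = m + 1"
    using int_le_if_of_int_less[of a "m + 1"] int_le_if_of_int_less[of m a] by force
  ultimately show False
    using assms unfolding hedge_present_def by auto
qed

lemma midpoint_same_step_not_in_contour_union:
  assumes "same_step \<omega> u w"
  shows "midpoint (vpt u) (vpt w) \<notin> contour_union \<omega>"
proof -
  obtain a b c d where uw: "u = (a,b)" "w = (c,d)"
    by (cases u, cases w)
  have same: "\<omega> u = \<omega> w"
    using assms unfolding same_step_def by simp
  consider "c = a + 1" "d = b" | "a = c + 1" "d = b" | "c = a" "d = b + 1" | "c = a" "b = d + 1"
    using assms unfolding uw same_step_def grid_adj_def by fastforce
  then show ?thesis
  proof cases
    case 1
    then show ?thesis
      using horizontal_midpoint_not_in_contour_union[of \<omega> a b] same uw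
      by (simp add: midpoint_def vpt_def field_simps)
  next
    case 2
    then show ?thesis
      using horizontal_midpoint_not_in_contour_union[of \<omega> c b] same uw
      by (simp add: midpoint_def vpt_def field_simps)
  next
    case 3
    then show ?thesis
      using vertical_midpoint_not_in_contour_union[of \<omega> a b] same uw
      by (simp add: midpoint_def vpt_def field_simps)
  next
    case 4
    then show ?thesis
      using vertical_midpoint_not_in_contour_union[of \<omega> a d] same uw
      by (simp add: midpoint_def vpt_def field_simps)
  qed
qed

definition vertex_star :: "config \<Rightarrow> vertex \<Rightarrow> (real \<times> real) set" where
  "vertex_star \<omega> u =
     insert (vpt u) (\<Union>w \<in> {w. same_step \<omega> u w}. closed_segment (vpt u) (midpoint (vpt u) (vpt w)))"

lemma vpt_in_vertex_star: "vpt u \<in> vertex_star \<omega> u"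
  unfolding vertex_star_def by blast

lemma connected_vertex_star: "connected (vertex_star \<omega> u)"
proof -
  let ?S = "insert {vpt u} ((\<lambda>w. closed_segment (vpt u) (midpoint (vpt u) (vpt w))) ` {w. same_step \<omega> u w})"
  have "vertex_star \<omega> u = \<Union> ?S"
    unfolding vertex_star_def by blast
  moreover have "connected (\<Union> ?S)"
    by (rule connected_Union) auto
  ultimately show ?thesis
    by simp
qed

lemma vertex_stars_meet:
  assumes "same_step \<omega> u w"
  shows "vertex_star \<omega> u \<inter> vertex_star \<omega> w \<noteq> {}"
proof -
  have "same_step \<omega> w u"
    using assms grid_adj_sym unfolding same_step_def by auto
  then have "midpoint (vpt u) (vpt w) \<in> vertex_star \<omega> u" "midpoint (vpt w) (vpt u) \<in> vertex_star \<omega> w"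
    using assms ends_in_segment(2) unfolding vertex_star_def by blast+
  then show ?thesis
    unfolding midpoint_sym[of "vpt w"] by blast
qed

lemma vertex_star_disjoint_contour_union: "vertex_star \<omega> u \<inter> contour_union \<omega> = {}"
proof -
  have "closed_segment (vpt u) (midpoint (vpt u) (vpt w)) \<inter> contour_union \<omega> = {}" if "same_step \<omega> u w" for w
    using segment_to_point_of_cell[OF midpoint_in_cell] midpoint_same_step_not_in_contour_union[OF that]
      open_cell_disjoint_contour_union that unfolding same_step_def by blast
  then show ?thesis
    using vpt_in_open_cell open_cell_disjoint_contour_union unfolding vertex_star_def by blast
qed

lemma cluster_in_component_avoiding_contours:
  assumes \<xi>: "cluster \<omega> \<xi>" and C1: "C1 \<in> contours \<omega>" "cells \<xi> \<inter> C1 \<noteq> {}"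
    and \<C>: "\<And>C. C \<in> \<C> \<Longrightarrow> C \<in> contours \<omega>" "C1 \<notin> \<C>"
    and R: "R \<in> components (- \<Union> \<C>)" "C1 \<subseteq> R"
  shows "vpt ` \<xi> \<subseteq> R"
proof -
  have C1c: "C1 \<in> components (contour_union \<omega>)"
    using C1(1) unfolding contours_eq_components .
  obtain p v where pv: "p \<in> cell v" "v \<in> \<xi>" "p \<in> C1"
    using C1(2) unfolding cells_def by blast
  obtain v0 where \<xi>_eq: "\<xi> = {w. reach \<omega> v0 w}"
    using \<xi> unfolding cluster_def by blast
  let ?Y = "\<Union> (vertex_star \<omega> ` \<xi>)"
  let ?K = "C1 \<union> closed_segment (vpt v) p \<union> ?Y"
  have "connected ?Y"
    unfolding \<xi>_eq using vpt_in_vertex_star vertex_stars_meet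
    by (intro connected_Union_rtranclp connected_vertex_star) blast+
  moreover have "vpt v \<in> ?Y"
    using pv(2) vpt_in_vertex_star by blast
  moreover have "connected (C1 \<union> closed_segment (vpt v) p)"
    using connected_Un[OF in_components_connected[OF C1c] connected_segment] pv(3) by blast
  ultimately have "connected ?K"
    using connected_Un by blast
  have "C1 \<inter> C = {}" if "C \<in> \<C>" for C
    using components_nonoverlap[OF C1c, of C] \<C> that unfolding contours_eq_components by auto
  then have "C1 \<inter> \<Union> \<C> = {}"
    by blast
  moreover have "\<Union> \<C> \<subseteq> contour_union \<omega>"
    using \<C>(1) in_components_subset unfolding contours_eq_components by blast
  moreover have "closed_segment (vpt v) p \<subseteq> open_cell v \<union> C1"
    using segment_to_point_of_cell[OF pv(1)] pv(3) by blast
  ultimately have "closed_segment (vpt v) p \<inter> \<Union> \<C> = {}" "?Y \<inter> \<Union> \<C> = {}" "C1 \<inter> \<Union> \<C> = {}"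
    using open_cell_disjoint_contour_union[of v \<omega>] vertex_star_disjoint_contour_union[of \<omega>] by blast+
  then have "?K \<subseteq> - \<Union> \<C>"
    by blast
  moreover have "R \<inter> ?K \<noteq> {}"
    using R(2) pv(3) by blast
  ultimately have "?K \<subseteq> R"
    using components_maximal[OF R(1) \<open>connected ?K\<close>] by blast
  then show ?thesis
    using vpt_in_vertex_star by blast
qed

theorem lemma2p5:
  fixes \<omega> :: config
  assumes "\<omega> \<in> Omega"
  shows
    "((\<exists>C1 C2. infinite_contour \<omega> C1 \<and> infinite_contour \<omega> C2 \<and> C1 \<noteq> C2) \<longrightarrow>
        (\<exists>\<xi>. cluster \<omega> \<xi> \<and> infinite \<xi> \<and> (\<forall>v\<in>\<xi>. \<omega> v = 0) \<or>
              cluster \<omega> \<xi> \<and> infinite \<xi> \<and> (\<forall>v\<in>\<xi>. \<omega> v = 1)))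
   \<and> (\<forall>C1 C2. infinite_contour \<omega> C1 \<and> infinite_contour \<omega> C2 \<and> C1 \<noteq> C2 \<longrightarrow>
        (\<exists>\<xi>. cluster \<omega> \<xi> \<and> infinite \<xi> \<and> incident \<omega> \<xi> C1))
   \<and> (\<forall>\<xi> C1 C2. cluster \<omega> \<xi> \<and> infinite_contour \<omega> C1 \<and> infinite_contour \<omega> C2 \<and> C1 \<noteq> C2
        \<and> incident \<omega> \<xi> C1 \<and> incident \<omega> \<xi> C2 \<longrightarrow> infinite \<xi>)
   \<and> (\<forall>C1 \<C> R. infinite_contour \<omega> C1 \<and> \<C> \<noteq> {} \<and> (\<forall>C\<in>\<C>. infinite_contour \<omega> C) \<and> C1 \<notin> \<C>
        \<and> R \<in> components (- \<Union> \<C>) \<and> \<not> bounded R \<and> C1 \<subseteq> R \<longrightarrow>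
        (\<exists>\<xi>. cluster \<omega> \<xi> \<and> infinite \<xi> \<and> vpt ` \<xi> \<subseteq> R))"
proof -
  have contour: "C \<in> contours \<omega>" "\<not> bounded C" if "infinite_contour \<omega> C" for C
    using that infinite_contour_unbounded unfolding infinite_contour_def by auto
  have meet: "\<exists>\<xi>. cluster \<omega> \<xi> \<and> infinite \<xi> \<and> cells \<xi> \<inter> C1 \<noteq> {}"
    if "infinite_contour \<omega> C1" "infinite_contour \<omega> C2" "C1 \<noteq> C2" for C1 C2
    using infinite_cluster_meets_unbounded_contour[OF assms contour(1)[OF that(1)] contour(1)[OF that(2)]
        that(3) contour(2)[OF that(1)] contour(2)[OF that(2)]] .
  have I: "\<exists>\<xi>. cluster \<omega> \<xi> \<and> infinite \<xi> \<and> (\<forall>v\<in>\<xi>. \<omega> v = 0) \<or>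
              cluster \<omega> \<xi> \<and> infinite \<xi> \<and> (\<forall>v\<in>\<xi>. \<omega> v = 1)"
    if hyps: "infinite_contour \<omega> C1" "infinite_contour \<omega> C2" "C1 \<noteq> C2" for C1 C2
  proof -
    obtain \<xi> where "cluster \<omega> \<xi>" "infinite \<xi>"
      using meet[OF hyps] by blast
    then show ?thesis
      using cluster_monochromatic[OF assms \<open>cluster \<omega> \<xi>\<close>] by blast
  qed
  have II: "\<exists>\<xi>. cluster \<omega> \<xi> \<and> infinite \<xi> \<and> incident \<omega> \<xi> C1"
    if hyps: "infinite_contour \<omega> C1" "infinite_contour \<omega> C2" "C1 \<noteq> C2" for C1 C2
  proof -
    obtain \<xi> where \<xi>: "cluster \<omega> \<xi>" "infinite \<xi>" "cells \<xi> \<inter> C1 \<noteq> {}"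
      using meet[OF hyps] by blast
    then show ?thesis
      using cells_meet_imp_incident[OF assms \<xi>(1) contour(1)[OF hyps(1)] \<xi>(3)] by blast
  qed
  have III: "infinite \<xi>"
    if hyps: "cluster \<omega> \<xi>" "infinite_contour \<omega> C1" "infinite_contour \<omega> C2" "C1 \<noteq> C2"
      "incident \<omega> \<xi> C1" "incident \<omega> \<xi> C2" for \<xi> C1 C2
  proof
    assume "finite \<xi>"
    have "C1 = C2"
      by (rule finite_cluster_meets_one_unbounded_contour[OF assms hyps(1) \<open>finite \<xi>\<close>
          contour(1)[OF hyps(2)] contour(1)[OF hyps(3)] contour(2)[OF hyps(2)] contour(2)[OF hyps(3)]
          incident_imp_cells_meet[OF hyps(5)] incident_imp_cells_meet[OF hyps(6)]])
    then show False
      using hyps(4) by contradiction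
  qed
  have IV: "\<exists>\<xi>. cluster \<omega> \<xi> \<and> infinite \<xi> \<and> vpt ` \<xi> \<subseteq> R"
    if hyps: "infinite_contour \<omega> C1" "\<C> \<noteq> {}" "\<forall>C\<in>\<C>. infinite_contour \<omega> C" "C1 \<notin> \<C>"
      "R \<in> components (- \<Union> \<C>)" "C1 \<subseteq> R" for C1 \<C> R
  proof -
    obtain C2 where "C2 \<in> \<C>"
      using hyps(2) by blast
    then obtain \<xi> where \<xi>: "cluster \<omega> \<xi>" "infinite \<xi>" "cells \<xi> \<inter> C1 \<noteq> {}"
      using meet[OF hyps(1), of C2] hyps(3,4) by auto
    have "\<And>C. C \<in> \<C> \<Longrightarrow> C \<in> contours \<omega>"
      using hyps(3) contour(1) by blast
    then have "vpt ` \<xi> \<subseteq> R"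
      by (rule cluster_in_component_avoiding_contours[OF \<xi>(1) contour(1)[OF hyps(1)] \<xi>(3) _ hyps(4-6)])
    then show ?thesis
      using \<xi>(1,2) by blast
  qed
  show ?thesis
    by (intro conjI impI allI; elim exE conjE; rule I II III IV; assumption)
qed

end
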